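(* Let $n\ge2$, $G=\mathrm{SL}(n,\mathbb{R})$, $V$ a finite-dimensional real continuous linear representation of $G$. Let $x_i\to x$ be a convergent sequence in $\mathbb{R}^{n-1}$ and $v\in V$ such that $u(x_i)v\in V^0+V^-$ for all $i\in\mathbb{N}$. Suppose there is a sequence $\delta_i\to0$ of nonzero reals such that $f=\lim_{i\to\infty}(x_i-x)/\delta_i$ exists. Then $u(f)\in\mathrm{Stab}_G(\pi_0(u(x)v))$.
   Context: $\mathcal{A}=\mathrm{diag}(n-1,-1,\dots,-1)$ acting on $V$ via the derived representation; $V^\mu=\{v:\mathcal{A}v=\mu v\}$, $V^-=\sum_{\mu<0}V^\mu$, $\pi_0:V\to V^0$ the projection parallel to the other eigenspaces of $\mathcal{A}$. $u(\xi)$ ($\xi\in\mathbb{R}^{n-1}$) is the identity matrix with first row replaced by $(1,\xi)$. *)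

theory Defs
  imports "HOL-Analysis.Analysis"
begin

text \<open>Matrices of size n = CARD('m) + 1 are indexed by the type 'm option;
  the index None plays the role of the first coordinate, and R^(n-1) is real^'m.\<close>

definition SL :: "(real^'n^'n) set" where
  "SL = {g. det g = 1}"

definition is_rep :: "(real^'n^'n \<Rightarrow> 'v::euclidean_space \<Rightarrow> 'v) \<Rightarrow> bool" where
  "is_rep \<rho> \<longleftrightarrow>
     (\<forall>g\<in>SL. linear (\<rho> g)) \<and>
     (\<forall>g\<in>SL. \<forall>h\<in>SL. \<rho> (g ** h) = \<rho> g \<circ> \<rho> h) \<and>
     \<rho> (mat 1) = id \<and>
     continuous_on (SL \<times> UNIV) (\<lambda>(g, v). \<rho> g v)"

text \<open>exp(t A) for A = diag(n-1,-1,...,-1).\<close>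
definition Aexp :: "real \<Rightarrow> real^('m::finite option)^('m option)" where
  "Aexp t = (\<chi> i j. if i = j then (if i = None then exp (real CARD('m) * t) else exp (- t)) else 0)"

text \<open>Eigenspace V^mu of the derived action of A: d/dt rho(exp(tA)) v at t=0 equals mu v.\<close>
definition eigsp :: "(real^('m::finite option)^('m option) \<Rightarrow> 'v::euclidean_space \<Rightarrow> 'v) \<Rightarrow> real \<Rightarrow> 'v set" where
  "eigsp \<rho> \<mu> = {v. ((\<lambda>t. \<rho> (Aexp t) v) has_vector_derivative (\<mu> *\<^sub>R v)) (at 0)}"

definition Vminus :: "(real^('m::finite option)^('m option) \<Rightarrow> 'v::euclidean_space \<Rightarrow> 'v) \<Rightarrow> 'v set" where
  "Vminus \<rho> = span (\<Union>\<mu>\<in>{\<mu>. \<mu> < 0}. eigsp \<rho> \<mu>)"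

definition Vother :: "(real^('m::finite option)^('m option) \<Rightarrow> 'v::euclidean_space \<Rightarrow> 'v) \<Rightarrow> 'v set" where
  "Vother \<rho> = span (\<Union>\<mu>\<in>{\<mu>. \<mu> \<noteq> 0}. eigsp \<rho> \<mu>)"

definition pi0 :: "(real^('m::finite option)^('m option) \<Rightarrow> 'v::euclidean_space \<Rightarrow> 'v) \<Rightarrow> 'v \<Rightarrow> 'v" where
  "pi0 \<rho> v = (THE w. w \<in> eigsp \<rho> 0 \<and> v - w \<in> Vother \<rho>)"

definition upper :: "real^'m \<Rightarrow> real^('m::finite option)^('m option)" where
  "upper \<xi> = (\<chi> i j. if i = None then (case j of None \<Rightarrow> 1 | Some k \<Rightarrow> \<xi> $ k)
                      else (if i = j then 1 else 0))"

definition Stab :: "(real^'n^'n \<Rightarrow> 'v \<Rightarrow> 'v) \<Rightarrow> 'v \<Rightarrow> (real^'n^'n) set" where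
  "Stab \<rho> w = {g \<in> SL. \<rho> g w = w}"

end

theory Submission
  imports Defs
begin

text \<open>Let a(t) = \<rho>(exp(tA)) and n = CARD('m) + 1. Conjugation by a(t) rescales the unipotent
  group, a(t) u(y) a(-t) = u(e^(nt) y), and a(t) acts on V^\<mu> by e^(\<mu>t); so it fixes V^0, contracts
  V^- as t \<rightarrow> \<infinity>, and preserves the closed subspace W = V^0 + V^-. The limit u(x)v lies in W;
  write it as w0 + wm with w0 \<in> V^0 and wm \<in> V^-, so that \<pi>0(u(x)v) = w0. Choosing e^(n t_i) = 1/|\<delta>_i|,
  the vectors a(t_i) u(x_i) v = u((x_i - x)/|\<delta>_i|) (w0 + a(t_i) wm) stay in W and, along the indices
  where \<delta>_i has a fixed sign \<sigma>, tend to u(\<sigma>f) w0. Finally, if u(g) w0 = p + q \<in> W, then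
  a(t) u(g) w0 = u(e^(nt) g) w0 \<rightarrow> w0 as t \<rightarrow> -\<infinity>, while a(t)(p + q) = p + a(t) q, and a(t) q
  diverges unless q = 0; hence u(g) fixes w0.\<close>

lemma sum_UNIV_option:
  "(\<Sum>k\<in>(UNIV::'m::finite option set). g k) = g None + (\<Sum>k\<in>UNIV. g (Some k))"
  by (simp add: UNIV_option_conv sum.reindex)

lemma matrix_mult_diagonal_left:
  assumes "\<And>i k. i \<noteq> k \<Longrightarrow> D $ i $ k = (0::real)"
  shows "(D ** M) $ i $ j = D $ i $ i * M $ i $ j"
proof -
  have "(D ** M) $ i $ j = (\<Sum>k\<in>UNIV. D $ i $ k * M $ k $ j)"
    by (simp add: matrix_matrix_mult_def)
  also have "\<dots> = (\<Sum>k\<in>UNIV. if k = i then D $ i $ i * M $ i $ j else 0)"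
    by (rule sum.cong) (auto simp: assms)
  finally show ?thesis by simp
qed

lemma matrix_mult_diagonal_right:
  assumes "\<And>i k. i \<noteq> k \<Longrightarrow> D $ i $ k = (0::real)"
  shows "(M ** D) $ i $ j = M $ i $ j * D $ j $ j"
proof -
  have "(M ** D) $ i $ j = (\<Sum>k\<in>UNIV. M $ i $ k * D $ k $ j)"
    by (simp add: matrix_matrix_mult_def)
  also have "\<dots> = (\<Sum>k\<in>UNIV. if k = j then M $ i $ j * D $ j $ j else 0)"
    by (rule sum.cong) (auto simp: assms)
  finally show ?thesis by simp
qed

lemma Aexp_offdiag: "i \<noteq> k \<Longrightarrow> Aexp t $ i $ k = 0"
  by (simp add: Aexp_def)

lemma Aexp_add: "Aexp s ** Aexp t = Aexp (s + t)"
  by (simp add: vec_eq_iff matrix_mult_diagonal_left Aexp_offdiag)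
     (simp add: Aexp_def exp_add[symmetric] algebra_simps)

lemma Aexp_zero: "Aexp 0 = mat 1"
  unfolding Aexp_def mat_def by (auto simp: vec_eq_iff)

lemma det_Aexp: "det (Aexp t :: real^('m::finite option)^('m option)) = 1"
  by (subst det_diagonal, simp add: Aexp_def)
     (simp add: Aexp_def UNIV_option_conv prod.reindex exp_of_nat_mult[symmetric] exp_add[symmetric])

lemma Aexp_in_SL: "Aexp t \<in> SL"
  by (simp add: SL_def det_Aexp)

lemma upper_add: "upper a ** upper b = upper (a + b)"
proof -
  have "(upper a ** upper b) $ i $ j = upper (a + b) $ i $ j" for i j
  proof -
    have "(upper a ** upper b) $ i $ j
        = upper a $ i $ None * upper b $ None $ j + (\<Sum>k\<in>UNIV. upper a $ i $ Some k * upper b $ Some k $ j)"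
      unfolding matrix_matrix_mult_def by (simp add: sum_UNIV_option)
    also have "\<dots> = upper (a + b) $ i $ j"
    proof (cases i)
      case None
      then show ?thesis
      proof (cases j)
        case (Some l)
        have "(\<Sum>k\<in>UNIV. a $ k * (if Some k = Some l then 1 else 0)) = a $ l"
          by (simp add: if_distrib[of "\<lambda>x. _ * x"] cong: if_cong)
        then show ?thesis using None Some by (simp add: upper_def)
      qed (simp add: upper_def)
    next
      case (Some p)
      have "(\<Sum>k\<in>UNIV. (if Some p = Some k then 1 else 0) * upper b $ Some k $ j) = upper b $ Some p $ j"
        by (simp add: if_distrib[of "\<lambda>x. x * _"] cong: if_cong)
      then show ?thesis using Some by (simp add: upper_def)
    qed
    finally show ?thesis .
  qed
  then show ?thesis by (simp add: vec_eq_iff)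
qed

lemma upper_zero: "upper 0 = mat 1"
  unfolding upper_def mat_def by (auto simp: vec_eq_iff split: option.splits)

lemma det_upper: "det (upper y :: real^('m::finite option)^('m option)) = 1"
proof -
  define X :: "real^('m option)" where "X = (\<Sum>k\<in>UNIV. (y $ k) *s row (Some k) (mat 1))"
  have "X \<in> vec.span {row j (mat 1 :: real^('m option)^('m option)) |j. j \<noteq> None}"
    unfolding X_def by (intro vec.span_sum vec.span_scale vec.span_base) blast
  then have "det (\<chi> k. if k = None then row None (mat 1) + X else row k (mat 1 :: real^('m option)^('m option))) = 1"
    by (simp add: det_row_span)
  moreover have "X $ j = (case j of None \<Rightarrow> 0 | Some l \<Rightarrow> y $ l)" for j
  proof -
    have "X $ j = (\<Sum>k\<in>UNIV. y $ k * (if Some k = j then 1 else 0))"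
      unfolding X_def by (simp add: sum_component row_def mat_def)
    then show ?thesis by (cases j) (simp_all add: if_distrib[of "\<lambda>x. _ * x"] cong: if_cong)
  qed
  then have "(\<chi> k. if k = None then row None (mat 1) + X else row k (mat 1)) = upper y"
    by (simp add: vec_eq_iff row_def mat_def upper_def split: option.splits)
  ultimately show ?thesis by simp
qed

lemma upper_in_SL: "upper y \<in> SL"
  by (simp add: SL_def det_upper)

lemma Aexp_mult_upper:
  "Aexp t ** upper y = upper (exp ((real CARD('m) + 1) * t) *\<^sub>R y) ** (Aexp t :: real^('m::finite option)^('m option))"
proof -
  have "Aexp t $ i $ i * upper y $ i $ j
      = upper (exp ((real CARD('m) + 1) * t) *\<^sub>R y) $ i $ j * (Aexp t :: real^('m option)^('m option)) $ j $ j"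
    for i j
    by (cases i; cases j) (simp_all add: Aexp_def upper_def exp_add[symmetric] algebra_simps)
  then show ?thesis
    by (simp add: vec_eq_iff matrix_mult_diagonal_left matrix_mult_diagonal_right Aexp_offdiag)
qed

lemma tendsto_upper:
  assumes "(y \<longlongrightarrow> y0) F"
  shows "((\<lambda>i. upper (y i)) \<longlongrightarrow> upper y0) F"
proof (rule vec_tendstoI)+
  fix i j
  show "((\<lambda>k. upper (y k) $ i $ j) \<longlongrightarrow> upper y0 $ i $ j) F"
    by (cases j) (auto simp: upper_def intro: tendsto_vec_nth assms)
qed

lemma tendsto_exp_mult_neg_at_top: "(c::real) < 0 \<Longrightarrow> ((\<lambda>t. exp (c * t)) \<longlongrightarrow> 0) at_top"
  by (rule filterlim_compose[OF exp_at_bot filterlim_tendsto_neg_mult_at_bot[OF tendsto_const _ filterlim_ident]])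

text \<open>Dividing by the exponential of the largest rate, every other term tends to 0.\<close>
lemma exp_sum_coeff_eq_0_at_top:
  fixes w :: "real \<Rightarrow> 'v::real_normed_vector"
  assumes "finite S" and "((\<lambda>t. \<Sum>\<mu>\<in>S. exp (\<mu> * t) *\<^sub>R w \<mu>) \<longlongrightarrow> L) at_top"
    and "\<mu> \<in> S" and "\<mu> > 0"
  shows "w \<mu> = 0"
  using assms
proof (induction S arbitrary: \<mu> rule: finite_linorder_max_induct)
  case empty
  then show ?case by simp
next
  case (insert b A)
  have "b \<notin> A" using insert by auto
  show ?case
  proof (cases "b > 0")
    case False
    then show ?thesis using insert by fastforce
  next
    case True
    have scaled: "exp (- b * t) *\<^sub>R (\<Sum>\<mu>\<in>insert b A. exp (\<mu> * t) *\<^sub>R w \<mu>)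
        = w b + (\<Sum>\<mu>\<in>A. exp ((\<mu> - b) * t) *\<^sub>R w \<mu>)" for t
      using \<open>b \<notin> A\<close> insert.hyps(1)
      by (simp add: scaleR_sum_right exp_add[symmetric] algebra_simps)
    have "((\<lambda>t. exp (- b * t) *\<^sub>R (\<Sum>\<mu>\<in>insert b A. exp (\<mu> * t) *\<^sub>R w \<mu>)) \<longlongrightarrow> 0 *\<^sub>R L) at_top"
      using True by (intro tendsto_scaleR tendsto_exp_mult_neg_at_top insert.prems(1)) simp
    then have "((\<lambda>t. w b + (\<Sum>\<mu>\<in>A. exp ((\<mu> - b) * t) *\<^sub>R w \<mu>)) \<longlongrightarrow> 0) at_top"
      unfolding scaled by simp
    moreover have "((\<lambda>t. w b + (\<Sum>\<mu>\<in>A. exp ((\<mu> - b) * t) *\<^sub>R w \<mu>)) \<longlongrightarrow> w b + 0) at_top"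
      using insert.hyps(2)
      by (intro tendsto_add tendsto_const tendsto_null_sum
          bounded_bilinear.tendsto_left_zero[OF bounded_bilinear_scaleR] tendsto_exp_mult_neg_at_top) auto
    ultimately have "w b = 0" using tendsto_unique[OF trivial_limit_at_top_linorder] by fastforce
    then have "((\<lambda>t. \<Sum>\<mu>\<in>A. exp (\<mu> * t) *\<^sub>R w \<mu>) \<longlongrightarrow> L) at_top"
      using insert.prems(1) \<open>b \<notin> A\<close> insert.hyps(1) by simp
    then show ?thesis using insert \<open>w b = 0\<close> by auto
  qed
qed

lemma exp_sum_coeff_eq_0_at_bot:
  fixes w :: "real \<Rightarrow> 'v::real_normed_vector"
  assumes "finite S" and "((\<lambda>t. \<Sum>\<mu>\<in>S. exp (\<mu> * t) *\<^sub>R w \<mu>) \<longlongrightarrow> L) at_bot"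
    and "\<mu> \<in> S" and "\<mu> < 0"
  shows "w \<mu> = 0"
proof -
  have "(\<Sum>\<mu>\<in>S. exp (\<mu> * - t) *\<^sub>R w \<mu>) = (\<Sum>\<nu>\<in>uminus ` S. exp (\<nu> * t) *\<^sub>R w (- \<nu>))" for t
    by (simp add: sum.reindex inj_on_def)
  then have "((\<lambda>t. \<Sum>\<nu>\<in>uminus ` S. exp (\<nu> * t) *\<^sub>R w (- \<nu>)) \<longlongrightarrow> L) at_top"
    using assms(2) by (simp add: filterlim_at_bot_mirror)
  from exp_sum_coeff_eq_0_at_top[OF finite_imageI[OF assms(1)] this imageI[OF assms(3)]]
  show ?thesis using assms(4) by simp
qed

definition Vnonpos :: "(real^('m::finite option)^('m option) \<Rightarrow> 'v::euclidean_space \<Rightarrow> 'v) \<Rightarrow> 'v set" where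
  "Vnonpos \<rho> = {a + b | a b. a \<in> eigsp \<rho> 0 \<and> b \<in> Vminus \<rho>}"

locale sl_rep =
  fixes \<rho> :: "real^('m::finite option)^('m option) \<Rightarrow> 'v::euclidean_space \<Rightarrow> 'v"
  assumes is_rep: "is_rep \<rho>"
begin

lemma linear_rep: "g \<in> SL \<Longrightarrow> linear (\<rho> g)"
  using is_rep unfolding is_rep_def by blast

lemma rep_mult: "g \<in> SL \<Longrightarrow> h \<in> SL \<Longrightarrow> \<rho> (g ** h) u = \<rho> g (\<rho> h u)"
  using is_rep unfolding is_rep_def by (metis comp_apply)

lemma rep_one [simp]: "\<rho> (mat 1) u = u"
  using is_rep unfolding is_rep_def by simp

lemma tendsto_rep:
  assumes "(g \<longlongrightarrow> g0) F" "(u \<longlongrightarrow> u0) F" "\<forall>\<^sub>F i in F. g i \<in> SL" "g0 \<in> SL"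
  shows "((\<lambda>i. \<rho> (g i) (u i)) \<longlongrightarrow> \<rho> g0 u0) F"
proof -
  have "continuous_on (SL \<times> UNIV) (\<lambda>(g, v). \<rho> g v)"
    using is_rep unfolding is_rep_def by blast
  then have "((\<lambda>i. (\<lambda>(g, v). \<rho> g v) (g i, u i)) \<longlongrightarrow> (\<lambda>(g, v). \<rho> g v) (g0, u0)) F"
    by (rule continuous_on_tendsto_compose)
       (use assms in \<open>auto intro: tendsto_Pair elim: eventually_mono\<close>)
  then show ?thesis by simp
qed

abbreviation a :: "real \<Rightarrow> 'v \<Rightarrow> 'v" where
  "a t \<equiv> \<rho> (Aexp t)"

lemma a_add: "a s (a t u) = a (s + t) u"
  by (metis rep_mult Aexp_in_SL Aexp_add)

lemma a_zero [simp]: "a 0 u = u"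
  by (simp add: Aexp_zero)

lemma linear_a: "linear (a t)"
  by (rule linear_rep[OF Aexp_in_SL])

lemma a_upper: "a t (\<rho> (upper y) u) = \<rho> (upper (exp ((real CARD('m) + 1) * t) *\<^sub>R y)) (a t u)"
  by (metis rep_mult Aexp_in_SL upper_in_SL Aexp_mult_upper)

lemma eigsp_has_vector_derivative:
  assumes "u \<in> eigsp \<rho> \<mu>"
  shows "((\<lambda>t. a t u) has_vector_derivative \<mu> *\<^sub>R a s u) (at s)"
proof -
  have bl: "bounded_linear (a s)"
    using linear_a linear_conv_bounded_linear by blast
  have "((\<lambda>h. a s (a h u)) has_vector_derivative a s (\<mu> *\<^sub>R u)) (at 0)"
    using assms unfolding eigsp_def by (auto intro: bounded_linear.has_vector_derivative[OF bl])
  then have outer: "((\<lambda>h. a s (a h u)) has_vector_derivative \<mu> *\<^sub>R a s u) (at ((\<lambda>t. t - s) s))"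
    by (simp add: linear_scale[OF linear_a])
  have inner: "((\<lambda>t. t - s) has_vector_derivative 1) (at s)"
    by (auto intro!: derivative_eq_intros)
  from vector_diff_chain_at[OF inner outer]
  have "((\<lambda>t. a s (a (t - s) u)) has_vector_derivative \<mu> *\<^sub>R a s u) (at s)"
    by (simp add: o_def)
  then show ?thesis by (simp add: a_add)
qed

lemma eigsp_iff: "u \<in> eigsp \<rho> \<mu> \<longleftrightarrow> (\<forall>t. a t u = exp (\<mu> * t) *\<^sub>R u)"
proof
  assume u: "u \<in> eigsp \<rho> \<mu>"
  have zero_deriv: "((\<lambda>t. exp (- \<mu> * t) *\<^sub>R a t u) has_vector_derivative 0) (at s within UNIV)" for s
  proof -
    have "((\<lambda>t. exp (- \<mu> * t) *\<^sub>R a t u) has_vector_derivative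
        (exp (- \<mu> * s) *\<^sub>R (\<mu> *\<^sub>R a s u) + (exp (- \<mu> * s) * (- \<mu>)) *\<^sub>R a s u)) (at s)"
      by (rule has_vector_derivative_scaleR[OF _ eigsp_has_vector_derivative[OF u]])
         (auto intro!: derivative_eq_intros)
    then show ?thesis by (simp add: algebra_simps)
  qed
  obtain c where c: "\<And>t. t \<in> UNIV \<Longrightarrow> exp (- \<mu> * t) *\<^sub>R a t u = c"
    by (rule has_vector_derivative_zero_constant[OF convex_UNIV zero_deriv]) blast
  show "\<forall>t. a t u = exp (\<mu> * t) *\<^sub>R u"
  proof
    fix t
    have "a t u = exp (\<mu> * t) *\<^sub>R (exp (- \<mu> * t) *\<^sub>R a t u)"
      by (simp add: exp_minus field_simps)
    also have "\<dots> = exp (\<mu> * t) *\<^sub>R u"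
      using c[of t] c[of 0] by simp
    finally show "a t u = exp (\<mu> * t) *\<^sub>R u" .
  qed
next
  assume "\<forall>t. a t u = exp (\<mu> * t) *\<^sub>R u"
  then have "(\<lambda>t. a t u) = (\<lambda>t. exp (\<mu> * t) *\<^sub>R u)" by auto
  moreover have "((\<lambda>t. exp (\<mu> * t) *\<^sub>R u) has_vector_derivative (exp (\<mu> * 0) * \<mu>) *\<^sub>R u) (at 0)"
    by (auto intro!: derivative_eq_intros)
  ultimately show "u \<in> eigsp \<rho> \<mu>" by (simp add: eigsp_def)
qed

lemma subspace_eigsp: "subspace (eigsp \<rho> \<mu>)"
  unfolding subspace_def
  by (auto simp: eigsp_iff linear_0[OF linear_a] linear_add[OF linear_a] linear_scale[OF linear_a]
      scaleR_add_right)

lemma span_eigsp_sum: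
  assumes "y \<in> span (\<Union>\<mu>\<in>T. eigsp \<rho> \<mu>)"
  shows "\<exists>S w. finite S \<and> S \<subseteq> T \<and> (\<forall>\<mu>. w \<mu> \<in> eigsp \<rho> \<mu>) \<and> y = (\<Sum>\<mu>\<in>S. w \<mu>)"
  using assms
proof (induction rule: span_induct_alt)
  case base
  show ?case
    by (rule exI[of _ "{}"], rule exI[of _ "\<lambda>_. 0"]) (simp add: subspace_0[OF subspace_eigsp])
next
  case (step c x y)
  then obtain \<mu>0 where \<mu>0: "\<mu>0 \<in> T" "x \<in> eigsp \<rho> \<mu>0"
    by auto
  from step obtain S w where Sw: "finite S" "S \<subseteq> T" "\<forall>\<mu>. w \<mu> \<in> eigsp \<rho> \<mu>" "y = (\<Sum>\<mu>\<in>S. w \<mu>)"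
    by blast
  define w' where "w' = w(\<mu>0 := (if \<mu>0 \<in> S then w \<mu>0 else 0) + c *\<^sub>R x)"
  have "\<forall>\<mu>. w' \<mu> \<in> eigsp \<rho> \<mu>"
    using Sw(3) \<mu>0(2) unfolding w'_def
    by (auto intro!: subspace_add[OF subspace_eigsp] subspace_scale[OF subspace_eigsp]
        simp: subspace_0[OF subspace_eigsp])
  moreover have "c *\<^sub>R x + y = (\<Sum>\<mu>\<in>insert \<mu>0 S. w' \<mu>)"
  proof (cases "\<mu>0 \<in> S")
    case True
    then have "(\<Sum>\<mu>\<in>insert \<mu>0 S. w' \<mu>) = w' \<mu>0 + (\<Sum>\<mu>\<in>S - {\<mu>0}. w' \<mu>)"
      using Sw(1) by (simp add: insert_absorb sum.remove)
    also have "(\<Sum>\<mu>\<in>S - {\<mu>0}. w' \<mu>) = (\<Sum>\<mu>\<in>S - {\<mu>0}. w \<mu>)"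
      by (rule sum.cong) (auto simp: w'_def)
    finally show ?thesis
      using True Sw(1,4) by (simp add: w'_def sum.remove)
  next
    case False
    have "(\<Sum>\<mu>\<in>S. w' \<mu>) = (\<Sum>\<mu>\<in>S. w \<mu>)"
      by (rule sum.cong) (use False in \<open>auto simp: w'_def\<close>)
    then show ?thesis
      using False Sw(1,4) by (simp add: w'_def)
  qed
  ultimately show ?case
    using Sw \<mu>0(1) by (intro exI[of _ "insert \<mu>0 S"] exI[of _ w']) auto
qed

lemma span_eigsp_decompose:
  assumes "y \<in> span (\<Union>\<mu>\<in>T. eigsp \<rho> \<mu>)"
  obtains S w where "finite S" "S \<subseteq> T" "\<forall>\<mu>. w \<mu> \<in> eigsp \<rho> \<mu>" "y = (\<Sum>\<mu>\<in>S. w \<mu>)"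
  using span_eigsp_sum[OF assms] by blast

lemma a_sum_eigsp:
  assumes "\<forall>\<mu>\<in>S. w \<mu> \<in> eigsp \<rho> \<mu>"
  shows "a t (\<Sum>\<mu>\<in>S. w \<mu>) = (\<Sum>\<mu>\<in>S. exp (\<mu> * t) *\<^sub>R w \<mu>)"
  using assms by (simp add: linear_sum[OF linear_a] eigsp_iff)

lemma eigsp_0_Vother_eq_0:
  assumes "d \<in> eigsp \<rho> 0" "d \<in> Vother \<rho>"
  shows "d = 0"
proof -
  obtain S w where Sw: "finite S" "S \<subseteq> {\<mu>. \<mu> \<noteq> 0}" "\<forall>\<mu>. w \<mu> \<in> eigsp \<rho> \<mu>" "d = (\<Sum>\<mu>\<in>S. w \<mu>)"
    using assms(2) unfolding Vother_def by (rule span_eigsp_decompose)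
  have "(\<Sum>\<mu>\<in>S. exp (\<mu> * t) *\<^sub>R w \<mu>) = d" for t
    using a_sum_eigsp[of S w t] Sw assms(1) by (simp add: eigsp_iff)
  then have top: "((\<lambda>t. \<Sum>\<mu>\<in>S. exp (\<mu> * t) *\<^sub>R w \<mu>) \<longlongrightarrow> d) at_top"
    and bot: "((\<lambda>t. \<Sum>\<mu>\<in>S. exp (\<mu> * t) *\<^sub>R w \<mu>) \<longlongrightarrow> d) at_bot"
    by simp_all
  have "w \<mu> = 0" if "\<mu> \<in> S" for \<mu>
  proof (cases "\<mu> > 0")
    case True
    then show ?thesis by (rule exp_sum_coeff_eq_0_at_top[OF Sw(1) top that])
  next
    case False
    with that Sw(2) have "\<mu> < 0" by auto
    then show ?thesis by (rule exp_sum_coeff_eq_0_at_bot[OF Sw(1) bot that])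
  qed
  then show ?thesis using Sw(4) by simp
qed

lemma Vminus_subset_Vother: "Vminus \<rho> \<subseteq> Vother \<rho>"
  unfolding Vminus_def Vother_def by (intro span_mono UN_mono) auto

lemma pi0_eq:
  assumes "w0 \<in> eigsp \<rho> 0" "wm \<in> Vminus \<rho>"
  shows "pi0 \<rho> (w0 + wm) = w0"
  unfolding pi0_def
proof (rule the_equality)
  show "w0 \<in> eigsp \<rho> 0 \<and> w0 + wm - w0 \<in> Vother \<rho>"
    using assms Vminus_subset_Vother by auto
next
  fix w' assume w': "w' \<in> eigsp \<rho> 0 \<and> w0 + wm - w' \<in> Vother \<rho>"
  have "w0 - w' \<in> eigsp \<rho> 0"
    using w' assms(1) by (simp add: subspace_diff[OF subspace_eigsp])
  moreover have "(w0 + wm - w') - wm \<in> Vother \<rho>"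
    using w' assms(2) Vminus_subset_Vother unfolding Vother_def by (blast intro: span_diff)
  then have "w0 - w' \<in> Vother \<rho>"
    by (simp add: algebra_simps)
  ultimately show "w' = w0"
    using eigsp_0_Vother_eq_0 by fastforce
qed

lemma a_Vminus:
  assumes "q \<in> Vminus \<rho>"
  shows "a t q \<in> Vminus \<rho>"
proof -
  obtain S w where Sw: "finite S" "S \<subseteq> {\<mu>. \<mu> < 0}" "\<forall>\<mu>. w \<mu> \<in> eigsp \<rho> \<mu>" "q = (\<Sum>\<mu>\<in>S. w \<mu>)"
    using assms unfolding Vminus_def by (rule span_eigsp_decompose)
  then have "a t q = (\<Sum>\<mu>\<in>S. exp (\<mu> * t) *\<^sub>R w \<mu>)"
    by (simp add: a_sum_eigsp)
  also have "\<dots> \<in> Vminus \<rho>"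
    unfolding Vminus_def using Sw(2,3) by (intro span_sum span_scale span_base) blast
  finally show ?thesis .
qed

lemma tendsto_a_Vminus:
  assumes "q \<in> Vminus \<rho>" "filterlim t at_top F"
  shows "((\<lambda>i. a (t i) q) \<longlongrightarrow> 0) F"
proof -
  obtain S w where Sw: "finite S" "S \<subseteq> {\<mu>. \<mu> < 0}" "\<forall>\<mu>. w \<mu> \<in> eigsp \<rho> \<mu>" "q = (\<Sum>\<mu>\<in>S. w \<mu>)"
    using assms(1) unfolding Vminus_def by (rule span_eigsp_decompose)
  have "((\<lambda>i. exp (\<mu> * t i) *\<^sub>R w \<mu>) \<longlongrightarrow> 0) F" if "\<mu> \<in> S" for \<mu>
    using that Sw(2)
    by (intro bounded_bilinear.tendsto_left_zero[OF bounded_bilinear_scaleR]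
        filterlim_compose[OF tendsto_exp_mult_neg_at_top assms(2)]) auto
  then have "((\<lambda>i. \<Sum>\<mu>\<in>S. exp (\<mu> * t i) *\<^sub>R w \<mu>) \<longlongrightarrow> 0) F"
    by (rule tendsto_null_sum)
  then show ?thesis
    using Sw by (simp add: a_sum_eigsp)
qed

lemma Vminus_eq_0_if_convergent_at_bot:
  assumes "q \<in> Vminus \<rho>" "((\<lambda>t. a t q) \<longlongrightarrow> L) at_bot"
  shows "q = 0"
proof -
  obtain S w where Sw: "finite S" "S \<subseteq> {\<mu>. \<mu> < 0}" "\<forall>\<mu>. w \<mu> \<in> eigsp \<rho> \<mu>" "q = (\<Sum>\<mu>\<in>S. w \<mu>)"
    using assms(1) unfolding Vminus_def by (rule span_eigsp_decompose)
  have "((\<lambda>t. \<Sum>\<mu>\<in>S. exp (\<mu> * t) *\<^sub>R w \<mu>) \<longlongrightarrow> L) at_bot"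
    using assms(2) Sw by (simp add: a_sum_eigsp)
  then have "\<forall>\<mu>\<in>S. w \<mu> = 0"
    using exp_sum_coeff_eq_0_at_bot[OF Sw(1)] Sw(2) by blast
  then show ?thesis using Sw(4) by simp
qed

lemma closed_Vnonpos: "closed (Vnonpos \<rho>)"
  unfolding Vnonpos_def Vminus_def
  by (intro closed_subspace subspace_sums subspace_eigsp subspace_span)

lemma a_Vnonpos:
  assumes "u \<in> Vnonpos \<rho>"
  shows "a t u \<in> Vnonpos \<rho>"
proof -
  obtain p q where "u = p + q" "p \<in> eigsp \<rho> 0" "q \<in> Vminus \<rho>"
    using assms unfolding Vnonpos_def by blast
  moreover have "a t p = p"
    using \<open>p \<in> eigsp \<rho> 0\<close> by (simp add: eigsp_iff)
  ultimately show ?thesis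
    unfolding Vnonpos_def using a_Vminus by (auto simp: linear_add[OF linear_a])
qed

lemma upper_fixes_if_in_Vnonpos:
  assumes w0: "w0 \<in> eigsp \<rho> 0" and in_V: "\<rho> (upper g) w0 \<in> Vnonpos \<rho>"
  shows "\<rho> (upper g) w0 = w0"
proof -
  obtain p q where pq: "\<rho> (upper g) w0 = p + q" "p \<in> eigsp \<rho> 0" "q \<in> Vminus \<rho>"
    using in_V unfolding Vnonpos_def by blast
  have "((\<lambda>t. exp ((real CARD('m) + 1) * t)) \<longlongrightarrow> 0) at_bot"
    by (rule filterlim_compose[OF exp_at_bot filterlim_tendsto_pos_mult_at_bot[OF tendsto_const _ filterlim_ident]])
       simp
  then have "((\<lambda>t. \<rho> (upper (exp ((real CARD('m) + 1) * t) *\<^sub>R g)) w0) \<longlongrightarrow> \<rho> (upper 0) w0) at_bot"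
    by (intro tendsto_rep tendsto_upper tendsto_const
        bounded_bilinear.tendsto_left_zero[OF bounded_bilinear_scaleR]) (auto simp: upper_in_SL)
  moreover have "\<rho> (upper (exp ((real CARD('m) + 1) * t) *\<^sub>R g)) w0 = p + a t q" for t
    using a_upper[of t g w0, symmetric] w0 pq by (simp add: eigsp_iff linear_add[OF linear_a])
  ultimately have lim: "((\<lambda>t. p + a t q) \<longlongrightarrow> w0) at_bot"
    by (simp add: upper_zero)
  then have "((\<lambda>t. a t q) \<longlongrightarrow> w0 - p) at_bot"
    using tendsto_diff[OF lim tendsto_const[of p]] by simp
  with pq(3) have "q = 0"
    by (rule Vminus_eq_0_if_convergent_at_bot)
  with lim have "p = w0"
    by (simp add: linear_0[OF linear_a] tendsto_const_iff)
  with pq(1) \<open>q = 0\<close> show ?thesis by simp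
qed

lemma upper_limit_in_Vnonpos:
  assumes in_V: "\<forall>i. \<rho> (upper (xs i)) v \<in> Vnonpos \<rho>"
    and w: "\<rho> (upper x) v = w0 + wm" "w0 \<in> eigsp \<rho> 0" "wm \<in> Vminus \<rho>"
    and t: "filterlim t at_top F"
    and g: "((\<lambda>i. exp ((real CARD('m) + 1) * t i) *\<^sub>R (xs i - x)) \<longlongrightarrow> g) F"
    and "F \<noteq> bot"
  shows "\<rho> (upper g) w0 \<in> Vnonpos \<rho>"
proof -
  have "a (t i) (\<rho> (upper (xs i)) v)
      = \<rho> (upper (exp ((real CARD('m) + 1) * t i) *\<^sub>R (xs i - x))) (w0 + a (t i) wm)" for i
  proof -
    have "\<rho> (upper (xs i)) v = \<rho> (upper (xs i - x)) (w0 + wm)"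
      using rep_mult[OF upper_in_SL upper_in_SL, of "xs i - x" x v] w(1) by (simp add: upper_add)
    then show ?thesis
      using w(2) by (simp add: a_upper linear_add[OF linear_a] eigsp_iff)
  qed
  moreover have "((\<lambda>i. \<rho> (upper (exp ((real CARD('m) + 1) * t i) *\<^sub>R (xs i - x))) (w0 + a (t i) wm))
      \<longlongrightarrow> \<rho> (upper g) (w0 + 0)) F"
    by (intro tendsto_rep tendsto_upper g tendsto_add tendsto_const tendsto_a_Vminus[OF w(3) t])
       (auto simp: upper_in_SL)
  ultimately have "((\<lambda>i. a (t i) (\<rho> (upper (xs i)) v)) \<longlongrightarrow> \<rho> (upper g) w0) F"
    by simp
  then show ?thesis
    using in_V a_Vnonpos by (intro Lim_in_closed_set[OF closed_Vnonpos _ \<open>F \<noteq> bot\<close>]) auto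
qed

lemma upper_signed_limit_fixes:
  assumes in_V: "\<forall>i. \<rho> (upper (xs i)) v \<in> Vnonpos \<rho>"
    and w: "\<rho> (upper x) v = w0 + wm" "w0 \<in> eigsp \<rho> 0" "wm \<in> Vminus \<rho>"
    and \<delta>: "\<delta> \<longlonglongrightarrow> 0" and f: "(\<lambda>i. (1 / \<delta> i) *\<^sub>R (xs i - x)) \<longlonglongrightarrow> f"
    and \<sigma>: "\<sigma> \<in> {1, -1}" "\<exists>\<^sub>F i in sequentially. \<sigma> * \<delta> i > 0"
  shows "\<rho> (upper (\<sigma> *\<^sub>R f)) w0 = w0"
proof -
  define c where "c = real CARD('m) + 1"
  define F where "F = inf sequentially (principal {i. \<sigma> * \<delta> i > 0})"
  have F_pos: "\<forall>\<^sub>F i in F. \<sigma> * \<delta> i > 0"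
    unfolding F_def eventually_inf_principal by simp
  have "F \<noteq> bot"
    using \<sigma>(2) by (simp add: F_def trivial_limit_def eventually_inf_principal frequently_def)
  have to_F: "(h \<longlongrightarrow> l) F" if "h \<longlonglongrightarrow> l" for h :: "nat \<Rightarrow> 'z::topological_space" and l
    using that unfolding F_def by (rule tendsto_mono[OF inf_le1])
  define t where "t i = (1 / c) * - ln (\<sigma> * \<delta> i)" for i
  have "((\<lambda>i. \<sigma> * \<delta> i) \<longlongrightarrow> 0) F"
    using to_F[OF tendsto_mult_right_zero[OF \<delta>]] .
  then have "filterlim (\<lambda>i. \<sigma> * \<delta> i) (at_right 0) F"
    unfolding filterlim_at using F_pos by (auto elim: eventually_mono)
  then have "filterlim (\<lambda>i. ln (\<sigma> * \<delta> i)) at_bot F"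
    by (rule filterlim_compose[OF ln_at_0])
  then have "filterlim (\<lambda>i. - ln (\<sigma> * \<delta> i)) at_top F"
    by (simp add: filterlim_uminus_at_top)
  then have "filterlim t at_top F"
    unfolding t_def by (intro filterlim_tendsto_pos_mult_at_top[OF tendsto_const]) (auto simp: c_def)
  moreover have "\<forall>\<^sub>F i in F. exp (c * t i) *\<^sub>R (xs i - x) = \<sigma> *\<^sub>R ((1 / \<delta> i) *\<^sub>R (xs i - x))"
    using F_pos
  proof (rule eventually_mono)
    fix i assume "\<sigma> * \<delta> i > 0"
    then have "exp (c * t i) = \<sigma> * (1 / \<delta> i)"
      using \<sigma>(1) by (auto simp: t_def c_def exp_minus inverse_eq_divide)
    then show "exp (c * t i) *\<^sub>R (xs i - x) = \<sigma> *\<^sub>R ((1 / \<delta> i) *\<^sub>R (xs i - x))"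
      by simp
  qed
  then have "((\<lambda>i. exp (c * t i) *\<^sub>R (xs i - x)) \<longlongrightarrow> \<sigma> *\<^sub>R f) F"
    by (rule tendsto_cong[THEN iffD2]) (intro tendsto_scaleR tendsto_const to_F f)
  ultimately have "\<rho> (upper (\<sigma> *\<^sub>R f)) w0 \<in> Vnonpos \<rho>"
    using upper_limit_in_Vnonpos[OF in_V w] \<open>F \<noteq> bot\<close> by (simp add: c_def)
  then show ?thesis
    using w(2) by (rule upper_fixes_if_in_Vnonpos[rotated])
qed

end

lemma frequently_sign:
  assumes "\<forall>i. (\<delta> i :: real) \<noteq> 0"
  obtains \<sigma> :: real where "\<sigma> \<in> {1, -1}" "\<exists>\<^sub>F i in sequentially. \<sigma> * \<delta> i > 0"
proof (cases "\<exists>\<^sub>F i in sequentially. \<delta> i > 0")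
  case True
  then show ?thesis using that[of 1] by simp
next
  case False
  then have "\<forall>\<^sub>F i in sequentially. \<not> \<delta> i > 0"
    by (simp add: not_frequently)
  then have "\<forall>\<^sub>F i in sequentially. -1 * \<delta> i > 0"
    by (rule eventually_mono) (use assms in \<open>simp add: linorder_not_less order.order_iff_strict\<close>)
  then show ?thesis
    using that[of "-1"] eventually_frequently[OF trivial_limit_sequentially] by blast
qed

theorem lemma4p5:
  fixes \<rho> :: "real^('m::finite option)^('m option) \<Rightarrow> 'v::euclidean_space \<Rightarrow> 'v"
    and xs :: "nat \<Rightarrow> real^'m" and x f :: "real^'m"
    and \<delta> :: "nat \<Rightarrow> real" and v :: 'v
  assumes "is_rep \<rho>"
    and "xs \<longlonglongrightarrow> x"
    and "\<forall>i. \<rho> (upper (xs i)) v \<in> {a + b | a b. a \<in> eigsp \<rho> 0 \<and> b \<in> Vminus \<rho>}"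
    and "\<delta> \<longlonglongrightarrow> 0"
    and "\<forall>i. \<delta> i \<noteq> 0"
    and "(\<lambda>i. (1 / \<delta> i) *\<^sub>R (xs i - x)) \<longlonglongrightarrow> f"
  shows "upper f \<in> Stab \<rho> (pi0 \<rho> (\<rho> (upper x) v))"
proof -
  interpret sl_rep \<rho> by (rule sl_rep.intro) (rule assms(1))
  have in_V: "\<forall>i. \<rho> (upper (xs i)) v \<in> Vnonpos \<rho>"
    using assms(3) unfolding Vnonpos_def .
  have "(\<lambda>i. \<rho> (upper (xs i)) v) \<longlonglongrightarrow> \<rho> (upper x) v"
    by (intro tendsto_rep tendsto_upper assms(2) tendsto_const) (auto simp: upper_in_SL)
  then have "\<rho> (upper x) v \<in> Vnonpos \<rho>"
    using in_V by (intro Lim_in_closed_set[OF closed_Vnonpos]) auto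
  then obtain w0 wm where w: "\<rho> (upper x) v = w0 + wm" "w0 \<in> eigsp \<rho> 0" "wm \<in> Vminus \<rho>"
    unfolding Vnonpos_def by blast
  obtain \<sigma> where \<sigma>: "\<sigma> \<in> {1, -1}" "\<exists>\<^sub>F i in sequentially. \<sigma> * \<delta> i > 0"
    using frequently_sign[OF assms(5)] .
  have "\<rho> (upper (\<sigma> *\<^sub>R f)) w0 = w0"
    by (rule upper_signed_limit_fixes[OF in_V w assms(4,6) \<sigma>])
  then have "\<rho> (upper f) w0 = w0"
    using \<sigma>(1) rep_mult[OF upper_in_SL upper_in_SL, of f "- f" w0]
    by (auto simp: upper_add upper_zero)
  then show ?thesis
    using w pi0_eq upper_in_SL by (simp add: Stab_def)
qed

end
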